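(* Every multiplicative generalized seminorm $\mathbb{Z}\to R$ with $R$ of tempered growth is multiplicatively equivalent to one of the following: the $p$-adic seminorm $|\cdot|_p$ for a prime $p$; the $p$-residual seminorm $|\cdot|_{p,0}$ for a prime $p$; the trivial norm $|\cdot|_0$; the archimedean norm $|\cdot|_\infty$. Thus $$\mathrm{Speh}^m(\mathbb{Z})=\{|\cdot|_p,|\cdot|_{p,0}: p\text{ prime}\}\cup\{|\cdot|_0\}\cup\{|\cdot|_\infty\}.$$ Moreover, the natural map $\mathcal{M}(\mathbb{Z})\to\mathrm{Speh}^m(\mathbb{Z})$, sending a multiplicative $\mathbb{R}_+$-valued seminorm to its multiplicative equivalence class, is surjective.
   Context: Halo: commutative unital semiring with a partial order compatible with $+$ and $\cdot$; halo morphism: increasing $f$ with $f(0)=0,f(1)=1$, $f(a+b)\le f(a)+f(b)$, $f(ab)\le f(a)f(b)$; rings carry the trivial order. An aura is a halo whose semiring is a semifield; positive means $0<1$. A generalized seminorm on a ring $A$ is a halo morphism to a positive totally ordered aura $R$; multiplicative if $|ab|=|a||b|$; tempered if $R$ has tempered growth: for every non-zero $P\in\mathbb{N}[X]$ and $x\in R$, ($x^n\le P(n)$ for all $n$) implies $x\le1$. Two seminorms $|\cdot|_1,|\cdot|_2$ on $A$ are multiplicatively equivalent if for all $a,b,c\in A$: $|a|_1|c|_1\le|b|_1\iff|a|_2|c|_2\le|b|_2$. A place is a multiplicative equivalence class of generalized seminorms; $\mathrm{Speh}^m(A)$ is the set of places represented by tempered multiplicative seminorms. $\mathcal{M}(\mathbb{Z})$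 is the set of multiplicative seminorms $\mathbb{Z}\to\mathbb{R}_+$ (with usual order; $\mathbb{R}_+$ has tempered growth). Here $|n|_p=p^{-\mathrm{ord}_p(n)}$ ($|0|_p=0$); $|n|_{p,0}=0$ if $p\mid n$ and $1$ otherwise, valued in $\{0,1\}$ with $1+1=1$; $|n|_0=1$ for $n\neq0$, $|0|_0=0$; $|n|_\infty=\max(n,-n)$. *)

theory Defs
  imports "HOL-Computational_Algebra.Polynomial" "HOL-Computational_Algebra.Primes"
begin

class tot_aura = comm_semiring_1 + linorder +
  assumes aura_add_mono: "a \<le> b \<Longrightarrow> a + c \<le> b + c"
  and aura_mult_mono: "a \<le> b \<Longrightarrow> a * c \<le> b * c"
  and aura_semifield: "a \<noteq> 0 \<Longrightarrow> \<exists>b. a * b = 1"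
  and aura_positive: "0 < 1"

definition tempered_growth :: "'r::tot_aura itself \<Rightarrow> bool" where
  "tempered_growth _ \<longleftrightarrow>
     (\<forall>(P::nat poly) (x::'r). P \<noteq> 0 \<longrightarrow> (\<forall>n. x ^ n \<le> of_nat (poly P n)) \<longrightarrow> x \<le> 1)"

text \<open>Halo morphism from a ring (trivial order, so monotonicity is vacuous)
into a positive totally ordered aura.\<close>

definition gen_seminorm :: "('a::comm_ring_1 \<Rightarrow> 'r::tot_aura) \<Rightarrow> bool" where
  "gen_seminorm f \<longleftrightarrow> f 0 = 0 \<and> f 1 = 1 \<and>
     (\<forall>a b. f (a + b) \<le> f a + f b) \<and> (\<forall>a b. f (a * b) \<le> f a * f b)"

definition mult_seminorm :: "('a::comm_ring_1 \<Rightarrow> 'r::tot_aura) \<Rightarrow> bool" where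
  "mult_seminorm f \<longleftrightarrow> gen_seminorm f \<and> (\<forall>a b. f (a * b) = f a * f b)"

definition mult_equiv :: "('a \<Rightarrow> 'r::{times,ord}) \<Rightarrow> ('a \<Rightarrow> 's::{times,ord}) \<Rightarrow> bool" where
  "mult_equiv f g \<longleftrightarrow> (\<forall>a b c. f a * f c \<le> f b \<longleftrightarrow> g a * g c \<le> g b)"

typedef nnreal = "{x::real. 0 \<le> x}" morphisms nn_val nn_of
  by auto

setup_lifting type_definition_nnreal

instantiation nnreal :: "{comm_semiring_1, linorder}"
begin
lift_definition zero_nnreal :: nnreal is 0 by simp
lift_definition one_nnreal :: nnreal is 1 by simp
lift_definition plus_nnreal :: "nnreal \<Rightarrow> nnreal \<Rightarrow> nnreal" is "(+)" by simp
lift_definition times_nnreal :: "nnreal \<Rightarrow> nnreal \<Rightarrow> nnreal" is "(*)" by simp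
lift_definition less_eq_nnreal :: "nnreal \<Rightarrow> nnreal \<Rightarrow> bool" is "(\<le>)" .
lift_definition less_nnreal :: "nnreal \<Rightarrow> nnreal \<Rightarrow> bool" is "(<)" .
instance
  by standard (transfer; auto simp: algebra_simps)+
end

instance nnreal :: tot_aura
proof
  fix a b c :: nnreal
  show "a \<le> b \<Longrightarrow> a + c \<le> b + c" by transfer simp
  show "a \<le> b \<Longrightarrow> a * c \<le> b * c" by transfer (simp add: mult_right_mono)
  show "a \<noteq> 0 \<Longrightarrow> \<exists>b. a * b = 1"
  proof transfer
    fix a :: real assume "0 \<le> a" "a \<noteq> 0"
    then show "\<exists>b\<in>{x. 0 \<le> x}. a * b = 1" by (intro bexI[of _ "inverse a"]) auto
  qed
  show "(0::nnreal) < 1" by transfer simp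
qed

datatype bsf = B0 | B1

instantiation bsf :: "{comm_semiring_1, linorder}"
begin
definition "0 = B0"
definition "1 = B1"
fun plus_bsf :: "bsf \<Rightarrow> bsf \<Rightarrow> bsf" where
  "plus_bsf B0 y = y" | "plus_bsf B1 y = B1"
fun times_bsf :: "bsf \<Rightarrow> bsf \<Rightarrow> bsf" where
  "times_bsf B0 y = B0" | "times_bsf B1 y = y"
definition less_eq_bsf :: "bsf \<Rightarrow> bsf \<Rightarrow> bool" where
  "less_eq_bsf x y \<longleftrightarrow> x = B0 \<or> y = B1"
definition less_bsf :: "bsf \<Rightarrow> bsf \<Rightarrow> bool" where
  "less_bsf x y \<longleftrightarrow> x = B0 \<and> y = B1"
instance
proof
  fix a b c :: bsf
  show "a + b + c = a + (b + c)" by (cases a; cases b; cases c) auto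
  show "a + b = b + a" by (cases a; cases b) auto
  show "0 + a = a" by (simp add: zero_bsf_def)
  show "a * b * c = a * (b * c)" by (cases a; cases b; cases c) auto
  show "a * b = b * a" by (cases a; cases b) auto
  show "1 * a = a" by (simp add: one_bsf_def)
  show "(a + b) * c = a * c + b * c" by (cases a; cases b; cases c) auto
  show "0 * a = 0" by (simp add: zero_bsf_def)
  show "a * 0 = 0" by (cases a) (auto simp: zero_bsf_def)
  show "(0::bsf) \<noteq> 1" by (simp add: zero_bsf_def one_bsf_def)
  show "(a < b) = (a \<le> b \<and> \<not> b \<le> a)" by (cases a; cases b) (auto simp: less_eq_bsf_def less_bsf_def)
  show "a \<le> a" by (cases a) (auto simp: less_eq_bsf_def)
  show "a \<le> b \<Longrightarrow> b \<le> c \<Longrightarrow> a \<le> c" by (cases a; cases b; cases c) (auto simp: less_eq_bsf_def)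
  show "a \<le> b \<Longrightarrow> b \<le> a \<Longrightarrow> a = b" by (cases a; cases b) (auto simp: less_eq_bsf_def)
  show "a \<le> b \<or> b \<le> a" by (cases a; cases b) (auto simp: less_eq_bsf_def)
qed
end

instance bsf :: tot_aura
proof
  fix a b c :: bsf
  show "a \<le> b \<Longrightarrow> a + c \<le> b + c" by (cases a; cases b; cases c) (auto simp: less_eq_bsf_def)
  show "a \<le> b \<Longrightarrow> a * c \<le> b * c" by (cases a; cases b; cases c) (auto simp: less_eq_bsf_def)
  show "a \<noteq> 0 \<Longrightarrow> \<exists>b. a * b = 1" by (cases a) (auto simp: zero_bsf_def one_bsf_def)
  show "(0::bsf) < 1" by (simp add: zero_bsf_def one_bsf_def less_bsf_def)
qed

definition padic_abs :: "nat \<Rightarrow> int \<Rightarrow> nnreal" where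
  "padic_abs p n = nn_of (if n = 0 then 0 else inverse (real p ^ multiplicity (int p) n))"

definition residual_abs :: "nat \<Rightarrow> int \<Rightarrow> bsf" where
  "residual_abs p n = (if int p dvd n then B0 else B1)"

definition trivial_abs :: "int \<Rightarrow> nnreal" where
  "trivial_abs n = (if n = 0 then 0 else 1)"

definition arch_abs :: "int \<Rightarrow> nnreal" where
  "arch_abs n = nn_of (real_of_int (max n (- n)))"

end

theory Submission
  imports Defs "HOL-Real_Asymp.Real_Asymp"
begin

text \<open>Ostrowski's argument, with tempered growth in place of taking \<open>k\<close>-th roots: an element
  whose powers \<open>x\<^sup>k\<close> are bounded by a polynomial in \<open>k\<close> is at most \<open>1\<close>. Writing \<open>m\<^sup>k\<close> in base
  \<open>n\<close> bounds \<open>|m|\<^sup>k\<close> by a polynomial in \<open>k\<close> times \<open>(max 1 |n|)\<^sup>k\<close>. Hence either \<open>|2| > 1\<close>, and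
  then \<open>|\<cdot>|\<close> is strictly increasing on the naturals, i.e. ordered like the archimedean norm; or
  \<open>|\<cdot>| \<le> 1\<close> everywhere, and then it is ultrametric (bound the binomial expansion of \<open>(a + b)\<^sup>k\<close>).
  In the second case \<open>{x. |x| < 1}\<close> is \<open>{0}\<close>, giving the trivial norm, or \<open>p\<int>\<close> for a prime \<open>p\<close>;
  then \<open>|x|\<close> is \<open>|p|\<close> raised to the \<open>p\<close>-adic valuation of \<open>x\<close>, which gives the \<open>p\<close>-adic place
  if \<open>|p| \<noteq> 0\<close> and the residual one if \<open>|p| = 0\<close>. Multiplicative equivalence of multiplicative
  seminorms only depends on the order they induce.\<close>

context tot_aura
begin

subclass ordered_comm_semiring
proof
  fix a b c :: 'a
  show "a \<le> b \<Longrightarrow> c + a \<le> c + b"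
    using aura_add_mono[of a b c] by (simp add: add.commute)
  show "a \<le> b \<Longrightarrow> 0 \<le> c \<Longrightarrow> c * a \<le> c * b"
    using aura_mult_mono[of a b c] by (simp add: mult.commute)
qed

subclass ordered_semiring_1
  by standard (fact aura_positive)

lemma aura_nonneg [simp]: "0 \<le> x"
proof (rule ccontr)
  assume "\<not> 0 \<le> x"
  with aura_mult_mono[of 0 1 x] show False by simp
qed

subclass semiring_1_no_zero_divisors
proof
  fix a b :: 'a
  assume "a \<noteq> 0" "b \<noteq> 0"
  then obtain c where "a * c = 1" using aura_semifield by blast
  then have "b = b * (a * c)" by simp
  also have "\<dots> = c * (a * b)" by (simp add: ac_simps)
  finally have "b = c * (a * b)" .
  show "a * b \<noteq> 0"
  proof
    assume "a * b = 0"
    with \<open>b = c * (a * b)\<close> \<open>b \<noteq> 0\<close> show False by simp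
  qed
qed

lemma aura_mult_le_cancel_right: "c \<noteq> 0 \<Longrightarrow> a * c \<le> b * c \<longleftrightarrow> a \<le> b"
proof
  assume "c \<noteq> 0" "a * c \<le> b * c"
  then obtain d where "c * d = 1" using aura_semifield by blast
  with aura_mult_mono[OF \<open>a * c \<le> b * c\<close>, of d] show "a \<le> b" by (simp add: mult.assoc)
qed (simp add: mult_right_mono)

lemma aura_of_nat_mono: "m \<le> n \<Longrightarrow> of_nat m \<le> of_nat n"
proof -
  assume "m \<le> n"
  then obtain k where "n = m + k" using le_Suc_ex by blast
  then show ?thesis by (simp add: add_increasing2)
qed

lemma aura_le_zero_iff [simp]: "x \<le> 0 \<longleftrightarrow> x = 0"
  using aura_nonneg[of x] by (auto intro: order.antisym)

lemma aura_mult_self_eq_one: "x * x = 1 \<Longrightarrow> x = 1"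
proof (cases x 1 rule: linorder_cases)
  case less
  then have "x * x \<le> x * 1" by (intro mult_left_mono) simp_all
  moreover assume "x * x = 1"
  ultimately show ?thesis using less by simp
next
  case greater
  then have "x * 1 \<le> x * x" by (intro mult_left_mono) simp_all
  moreover assume "x * x = 1"
  ultimately show ?thesis using greater by simp
qed

end

lemma aura_power_strict_decreasing:
  fixes c :: "'a::tot_aura"
  assumes "0 < c" "c < 1" "m < n"
  shows "c ^ n < c ^ m"
proof -
  obtain k where n: "n = m + Suc k" using less_imp_Suc_add[OF \<open>m < n\<close>] by auto
  have "c ^ k \<le> 1" using \<open>c < 1\<close> by (simp add: power_le_one)
  then have "c * c ^ k \<le> c * 1" by (rule mult_left_mono) simp
  with \<open>c < 1\<close> have "\<not> 1 \<le> c ^ Suc k" by simp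
  moreover have "c ^ m \<noteq> 0" using \<open>0 < c\<close> by simp
  ultimately have "\<not> c ^ m * 1 \<le> c ^ m * c ^ Suc k"
    using aura_mult_le_cancel_right[of "c ^ m" 1 "c ^ Suc k"] by (simp add: mult.commute)
  then show ?thesis by (simp add: n power_add not_le ac_simps)
qed

lemma aura_power_le_power_iff:
  fixes c :: "'a::tot_aura"
  assumes "0 < c" "c < 1"
  shows "c ^ m \<le> c ^ n \<longleftrightarrow> n \<le> m"
proof
  show "n \<le> m" if "c ^ m \<le> c ^ n"
  proof (rule ccontr)
    assume "\<not> n \<le> m"
    then have "c ^ n < c ^ m" by (intro aura_power_strict_decreasing[OF assms]) simp
    with that show False by simp
  qed
  show "c ^ m \<le> c ^ n" if "n \<le> m"
    using that aura_power_strict_decreasing[OF assms, of n m] by (cases "n = m") auto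
qed

lemma gen_seminorm_zero: "gen_seminorm f \<Longrightarrow> f 0 = 0"
  and gen_seminorm_one: "gen_seminorm f \<Longrightarrow> f 1 = 1"
  and gen_seminorm_add: "gen_seminorm f \<Longrightarrow> f (a + b) \<le> f a + f b"
  and gen_seminorm_mult: "gen_seminorm f \<Longrightarrow> f (a * b) \<le> f a * f b"
  by (simp_all add: gen_seminorm_def)

lemma mult_seminorm_gen_seminorm: "mult_seminorm f \<Longrightarrow> gen_seminorm f"
  and mult_seminorm_zero: "mult_seminorm f \<Longrightarrow> f 0 = 0"
  and mult_seminorm_one: "mult_seminorm f \<Longrightarrow> f 1 = 1"
  and mult_seminorm_add: "mult_seminorm f \<Longrightarrow> f (a + b) \<le> f a + f b"
  and mult_seminorm_mult: "mult_seminorm f \<Longrightarrow> f (a * b) = f a * f b"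
  by (simp_all add: mult_seminorm_def gen_seminorm_def)

lemma mult_seminormI:
  "f 0 = 0 \<Longrightarrow> f 1 = 1 \<Longrightarrow> (\<And>a b. f (a + b) \<le> f a + f b) \<Longrightarrow> (\<And>a b. f (a * b) = f a * f b)
    \<Longrightarrow> mult_seminorm f"
  by (simp add: mult_seminorm_def gen_seminorm_def)

lemma gen_seminorm_of_nat_le:
  fixes f :: "'a::comm_ring_1 \<Rightarrow> 'r::tot_aura"
  assumes "gen_seminorm f"
  shows "f (of_nat n) \<le> of_nat n"
proof (induction n)
  case (Suc n)
  have "f (of_nat (Suc n)) \<le> f (of_nat n) + f 1"
    using gen_seminorm_add[OF assms, of "of_nat n" 1] by (simp add: add.commute)
  also have "\<dots> \<le> of_nat n + 1" using Suc by (simp add: gen_seminorm_one[OF assms] add_right_mono)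
  finally show ?case by (simp add: add.commute)
qed (simp add: gen_seminorm_zero[OF assms])

lemma gen_seminorm_sum_le:
  fixes f :: "'a::comm_ring_1 \<Rightarrow> 'r::tot_aura"
  assumes "gen_seminorm f"
  shows "f (sum g A) \<le> (\<Sum>i\<in>A. f (g i))"
proof (induction A rule: infinite_finite_induct)
  case (insert x A)
  then have "f (sum g (insert x A)) \<le> f (g x) + f (sum g A)" using gen_seminorm_add[OF assms] by simp
  also have "\<dots> \<le> f (g x) + (\<Sum>i\<in>A. f (g i))" using insert by (simp add: add_left_mono)
  finally show ?case using insert by simp
qed (simp_all add: gen_seminorm_zero[OF assms])

lemma mult_seminorm_power:
  "mult_seminorm f \<Longrightarrow> f (a ^ k) = f a ^ k"
  by (induction k) (simp_all add: mult_seminorm_mult mult_seminorm_one)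

lemma mult_seminorm_minus:
  fixes f :: "'a::comm_ring_1 \<Rightarrow> 'r::tot_aura"
  assumes "mult_seminorm f"
  shows "f (- a) = f a"
proof -
  have "f (-1) * f (-1) = 1"
    using mult_seminorm_mult[OF assms, of "-1" "-1"] mult_seminorm_one[OF assms] by simp
  then have "f (-1) = 1" by (rule aura_mult_self_eq_one)
  then show ?thesis using mult_seminorm_mult[OF assms, of "-1" a] by simp
qed

lemma mult_seminorm_abs:
  fixes f :: "int \<Rightarrow> 'r::tot_aura"
  shows "mult_seminorm f \<Longrightarrow> f \<bar>a\<bar> = f a"
  by (simp add: abs_if mult_seminorm_minus)

lemma mult_equiv_sym: "mult_equiv f g \<Longrightarrow> mult_equiv g f"
  and mult_equiv_trans: "mult_equiv f g \<Longrightarrow> mult_equiv g h \<Longrightarrow> mult_equiv f h"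
  by (simp_all add: mult_equiv_def)

lemma mult_equiv_if_le_iff:
  assumes "\<And>a b. f (a * b) = f a * f b" "\<And>a b. g (a * b) = g a * g b"
    and "\<And>x y. f x \<le> f y \<longleftrightarrow> g x \<le> g y"
  shows "mult_equiv f g"
  unfolding mult_equiv_def by (simp add: assms(1,2)[symmetric] assms(3))

section \<open>Growth of multiplicative seminorms on the integers\<close>

lemma tempered_growthD:
  fixes x :: "'r::tot_aura"
  assumes "tempered_growth TYPE('r)" "P \<noteq> 0" "\<And>n. x ^ n \<le> of_nat (poly P n)"
  shows "x \<le> 1"
  using assms unfolding tempered_growth_def by blast

lemma tempered_growth_le_scaled:
  fixes x M :: "'r::tot_aura"
  assumes tg: "tempered_growth TYPE('r)" and "P \<noteq> 0" "M \<noteq> 0"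
    and bound: "\<And>n. x ^ n \<le> of_nat (poly P n) * M ^ n"
  shows "x \<le> M"
proof -
  obtain i where i: "M * i = 1" using aura_semifield \<open>M \<noteq> 0\<close> by blast
  have "x * i \<le> 1"
  proof (rule tempered_growthD[OF tg \<open>P \<noteq> 0\<close>])
    fix n
    have "(x * i) ^ n \<le> of_nat (poly P n) * M ^ n * i ^ n"
      using bound by (simp add: power_mult_distrib mult_right_mono)
    also have "\<dots> = of_nat (poly P n) * (M * i) ^ n" by (simp add: power_mult_distrib mult.assoc)
    also have "\<dots> = of_nat (poly P n)" by (simp add: i)
    finally show "(x * i) ^ n \<le> of_nat (poly P n)" .
  qed
  then have "x * i \<le> M * i" by (simp add: i)
  moreover have "i \<noteq> 0" using i by auto
  ultimately show ?thesis by (simp add: aura_mult_le_cancel_right)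
qed

lemma gen_seminorm_digit_bound:
  fixes f :: "int \<Rightarrow> 'r::tot_aura"
  assumes f: "gen_seminorm f" and "0 < n" and fn: "f (int n) \<le> M" and "1 \<le> M"
  shows "m < n ^ Suc L \<Longrightarrow> f (int m) \<le> of_nat (Suc L) * of_nat n * M ^ L"
proof (induction L arbitrary: m)
  case 0
  then have "f (int m) \<le> of_nat n"
    using order_trans[OF gen_seminorm_of_nat_le[OF f, of m] aura_of_nat_mono[of m n]] by simp
  then show ?case by simp
next
  case (Suc L)
  define q r where "q = m div n" and "r = m mod n"
  have q: "q < n ^ Suc L" using Suc.prems \<open>0 < n\<close> unfolding q_def
    by (simp add: div_less_iff_less_mult mult.commute)
  have r: "r < n" using \<open>0 < n\<close> unfolding r_def by simp
  have "int m = int q * int n + int r" unfolding q_def r_def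
    by (metis div_mult_mod_eq of_nat_add of_nat_mult)
  then have "f (int m) \<le> f (int q * int n) + f (int r)" using gen_seminorm_add[OF f] by simp
  also have "\<dots> \<le> f (int q) * f (int n) + f (int r)" by (rule add_right_mono[OF gen_seminorm_mult[OF f]])
  also have "\<dots> \<le> (of_nat (Suc L) * of_nat n * M ^ L) * M + of_nat n"
  proof (rule add_mono)
    show "f (int q) * f (int n) \<le> (of_nat (Suc L) * of_nat n * M ^ L) * M"
      using Suc.IH[OF q] fn by (intro mult_mono) simp_all
    show "f (int r) \<le> of_nat n"
      using order_trans[OF gen_seminorm_of_nat_le[OF f, of r] aura_of_nat_mono[of r n]] r by simp
  qed
  also have "\<dots> \<le> of_nat (Suc L) * of_nat n * M ^ Suc L + of_nat n * M ^ Suc L"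
    using mult_left_mono[OF one_le_power[OF \<open>1 \<le> M\<close>, of "Suc L"], of "of_nat n"]
    by (intro add_mono) (simp_all add: ac_simps)
  also have "\<dots> = of_nat (Suc (Suc L)) * of_nat n * M ^ Suc L"
    by (simp add: algebra_simps)
  finally show ?case .
qed

lemma mult_seminorm_of_nat_le_one:
  fixes f :: "int \<Rightarrow> 'r::tot_aura"
  assumes tg: "tempered_growth TYPE('r)" and f: "mult_seminorm f"
    and "2 \<le> n" and fn: "f (int n) \<le> 1"
  shows "f (int m) \<le> 1"
proof (rule tempered_growthD[OF tg])
  show "[:n, m * n:] \<noteq> 0" using \<open>2 \<le> n\<close> by simp
  fix k
  have "m < n ^ m" using \<open>2 \<le> n\<close> less_exp[of m] power_mono[of 2 n m] by linarith
  then have "m ^ k \<le> (n ^ m) ^ k" by (simp add: power_mono)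
  also have "\<dots> < n ^ Suc (m * k)" using \<open>2 \<le> n\<close> by (simp flip: power_mult)
  finally have "m ^ k < n ^ Suc (m * k)" .
  then have "f (int (m ^ k)) \<le> of_nat (Suc (m * k)) * of_nat n * 1 ^ (m * k)"
    using \<open>2 \<le> n\<close> fn by (intro gen_seminorm_digit_bound mult_seminorm_gen_seminorm f) simp_all
  then show "f (int m) ^ k \<le> of_nat (poly [:n, m * n:] k)"
    by (simp add: mult_seminorm_power[OF f, symmetric] algebra_simps)
qed

lemma mult_seminorm_of_nat_le_max:
  fixes f :: "int \<Rightarrow> 'r::tot_aura"
  assumes tg: "tempered_growth TYPE('r)" and f: "mult_seminorm f"
    and "2 \<le> n" and "m \<le> n"
  shows "f (int m) \<le> max 1 (f (int n))"
proof (rule tempered_growth_le_scaled[OF tg])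
  show "[:n, n:] \<noteq> 0" using \<open>2 \<le> n\<close> by simp
  have "0 < max 1 (f (int n))" by (simp add: less_max_iff_disj)
  then show "max 1 (f (int n)) \<noteq> 0" by simp
  fix k
  have "m ^ k < n ^ Suc k"
    using \<open>m \<le> n\<close> \<open>2 \<le> n\<close> power_mono[of m n k] by (simp add: le_less_trans)
  then have "f (int (m ^ k)) \<le> of_nat (Suc k) * of_nat n * max 1 (f (int n)) ^ k"
    using \<open>2 \<le> n\<close> by (intro gen_seminorm_digit_bound mult_seminorm_gen_seminorm f) simp_all
  then show "f (int m) ^ k \<le> of_nat (poly [:n, n:] k) * max 1 (f (int n)) ^ k"
    by (simp add: mult_seminorm_power[OF f, symmetric] algebra_simps)
qed

lemma mult_seminorm_ultrametric:
  fixes f :: "'a::comm_ring_1 \<Rightarrow> 'r::tot_aura"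
  assumes tg: "tempered_growth TYPE('r)" and f: "mult_seminorm f" and le1: "\<And>x. f x \<le> 1"
  shows "f (a + b) \<le> max (f a) (f b)"
proof (cases "max (f a) (f b) = 0")
  case True
  then show ?thesis using mult_seminorm_add[OF f, of a b] by (simp add: max_def split: if_splits)
next
  case False
  show ?thesis
  proof (rule tempered_growth_le_scaled[OF tg _ False])
    show "[:1, 1:] \<noteq> (0::nat poly)" by simp
    fix k
    let ?M = "max (f a) (f b)"
    have term_bound: "f (of_nat (k choose j) * a ^ j * b ^ (k - j)) \<le> ?M ^ k" if "j \<le> k" for j
    proof -
      have "f (of_nat (k choose j) * a ^ j * b ^ (k - j)) = f (of_nat (k choose j)) * (f a ^ j * f b ^ (k - j))"
        by (simp add: mult_seminorm_mult[OF f] mult_seminorm_power[OF f] mult.assoc)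
      also have "\<dots> \<le> 1 * (?M ^ j * ?M ^ (k - j))"
        by (intro mult_mono le1 power_mono) simp_all
      finally show ?thesis using that by (simp flip: power_add)
    qed
    have "f (a + b) ^ k = f (\<Sum>j\<le>k. of_nat (k choose j) * a ^ j * b ^ (k - j))"
      by (simp add: mult_seminorm_power[OF f, symmetric] binomial_ring)
    also have "\<dots> \<le> (\<Sum>j\<le>k. f (of_nat (k choose j) * a ^ j * b ^ (k - j)))"
      by (rule gen_seminorm_sum_le[OF mult_seminorm_gen_seminorm[OF f]])
    also have "\<dots> \<le> (\<Sum>j\<le>k. ?M ^ k)" by (rule sum_mono) (simp add: term_bound)
    also have "\<dots> = of_nat (poly [:1, 1:] k) * ?M ^ k" by simp
    finally show "f (a + b) ^ k \<le> of_nat (poly [:1, 1:] k) * ?M ^ k" .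
  qed
qed

lemma nn_val_nn_of [simp]: "0 \<le> r \<Longrightarrow> nn_val (nn_of r) = r"
  by (simp add: nn_of_inverse)

lemmas nn_val_ops [simp] =
  zero_nnreal.rep_eq one_nnreal.rep_eq plus_nnreal.rep_eq times_nnreal.rep_eq

lemma nnreal_le_iff: "x \<le> y \<longleftrightarrow> nn_val x \<le> nn_val y"
  by (rule less_eq_nnreal.rep_eq)

lemma nnreal_eq_iff: "x = y \<longleftrightarrow> nn_val x = nn_val y"
  by (simp add: nn_val_inject)

lemma nn_val_power [simp]: "nn_val (x ^ n) = nn_val x ^ n"
  by (induction n) simp_all

lemma nn_val_of_nat [simp]: "nn_val (of_nat n) = real n"
  by (induction n) simp_all

lemma arch_abs_le_iff: "arch_abs x \<le> arch_abs y \<longleftrightarrow> \<bar>x\<bar> \<le> \<bar>y\<bar>"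
  and nn_val_arch_abs: "nn_val (arch_abs x) = real_of_int \<bar>x\<bar>"
  by (simp_all add: arch_abs_def nnreal_le_iff abs_if max_def)

lemma mult_seminorm_arch_abs: "mult_seminorm arch_abs"
  by (rule mult_seminormI)
    (simp_all add: nnreal_le_iff nnreal_eq_iff nn_val_arch_abs abs_mult abs_triangle_ineq
      flip: of_int_abs of_int_add)

lemma trivial_abs_le_iff: "trivial_abs x \<le> trivial_abs y \<longleftrightarrow> x = 0 \<or> y \<noteq> 0"
  by (simp add: trivial_abs_def nnreal_le_iff)

lemma mult_seminorm_trivial_abs: "mult_seminorm trivial_abs"
  by (rule mult_seminormI) (simp_all add: trivial_abs_def nnreal_le_iff)

lemma residual_abs_le_iff: "residual_abs p x \<le> residual_abs p y \<longleftrightarrow> int p dvd x \<or> \<not> int p dvd y"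
  by (auto simp: residual_abs_def less_eq_bsf_def)

lemma mult_seminorm_residual_abs:
  assumes "prime p"
  shows "mult_seminorm (residual_abs p)"
proof (rule mult_seminormI)
  have "prime (int p)" using assms by simp
  then show "residual_abs p (a * b) = residual_abs p a * residual_abs p b" for a b
    by (simp add: residual_abs_def prime_dvd_mult_iff)
  show "residual_abs p (a + b) \<le> residual_abs p a + residual_abs p b" for a b
    by (auto simp: residual_abs_def less_eq_bsf_def)
  show "residual_abs p 1 = 1"
    using prime_gt_1_nat[OF assms] by (simp add: residual_abs_def one_bsf_def)
qed (simp add: residual_abs_def zero_bsf_def)

lemma nn_val_padic_abs:
  "nn_val (padic_abs p x) = (if x = 0 then 0 else inverse (real p ^ multiplicity (int p) x))"
  by (simp add: padic_abs_def)

lemma padic_abs_le_iff: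
  assumes "prime p"
  shows "padic_abs p x \<le> padic_abs p y \<longleftrightarrow>
    x = 0 \<or> (y \<noteq> 0 \<and> multiplicity (int p) y \<le> multiplicity (int p) x)"
proof -
  have "1 < real p" using prime_gt_1_nat[OF assms] by simp
  then have "0 < inverse (real p ^ multiplicity (int p) x)" by simp
  moreover have "inverse (real p ^ u) \<le> inverse (real p ^ v) \<longleftrightarrow> v \<le> u" for u v
    using \<open>1 < real p\<close> by (simp add: inverse_le_iff_le power_increasing_iff)
  ultimately show ?thesis by (auto simp: nnreal_le_iff nn_val_padic_abs not_le[symmetric])
qed

lemma mult_seminorm_padic_abs:
  assumes p: "prime p"
  shows "mult_seminorm (padic_abs p)"
proof (rule mult_seminormI)
  let ?v = "multiplicity (int p)"
  have "prime_elem (int p)" using p by simp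
  then show "padic_abs p (a * b) = padic_abs p a * padic_abs p b" for a b
    by (simp add: nnreal_eq_iff nn_val_padic_abs prime_elem_multiplicity_mult_distrib power_add)
  show "padic_abs p (a + b) \<le> padic_abs p a + padic_abs p b" for a b
  proof (cases "a = 0 \<or> b = 0 \<or> a + b = 0")
    case True
    then show ?thesis by (auto simp: nnreal_le_iff nn_val_padic_abs)
  next
    case False
    define k where "k = min (?v a) (?v b)"
    have "int p ^ k dvd a + b" unfolding k_def by (intro dvd_add multiplicity_dvd') auto
    then have "k \<le> ?v (a + b)"
      using False prime_gt_1_nat[OF p] by (intro multiplicity_geI) auto
    then have "inverse (real p ^ ?v (a + b)) \<le> inverse (real p ^ k)"
      using prime_gt_1_nat[OF p] by (simp add: inverse_le_iff_le power_increasing_iff)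
    also have "\<dots> \<le> inverse (real p ^ ?v a) + inverse (real p ^ ?v b)"
      unfolding k_def by (simp add: min_def add_increasing add_increasing2)
    finally show ?thesis using False by (simp add: nnreal_le_iff nn_val_padic_abs)
  qed
  show "padic_abs p 1 = 1" "padic_abs p 0 = 0" by (simp_all add: nnreal_eq_iff nn_val_padic_abs)
qed

section \<open>The archimedean case\<close>

lemma Bernoulli_inequality_nat: "(m::nat) ^ b * (m + b) \<le> m * (m + 1) ^ b"
proof (induction b)
  case (Suc b)
  have "m ^ Suc b * (m + Suc b) = m * (m ^ b * (m + b)) + m ^ Suc b" by (simp add: algebra_simps)
  also have "\<dots> \<le> m * (m ^ b * (m + b)) + m ^ b * (m + b)" by (simp add: mult_left_mono)
  also have "\<dots> = (m + 1) * (m ^ b * (m + b))" by (simp add: algebra_simps)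
  also have "\<dots> \<le> (m + 1) * (m * (m + 1) ^ b)" by (rule mult_left_mono[OF Suc.IH]) simp
  also have "\<dots> = m * (m + 1) ^ Suc b" by (simp add: algebra_simps)
  finally show ?case .
qed simp

lemma power_Suc_le_Suc_power:
  assumes "1 \<le> (m::nat)"
  shows "m ^ Suc (m * m) \<le> (m + 1) ^ (m * m)"
proof -
  have "m * (m ^ (m * m) * (1 + m)) = m ^ (m * m) * (m + m * m)" by (simp add: algebra_simps)
  also have "\<dots> \<le> m * (m + 1) ^ (m * m)" by (rule Bernoulli_inequality_nat)
  finally have "m ^ (m * m) * (1 + m) \<le> (m + 1) ^ (m * m)" using assms by simp
  then show ?thesis by (simp add: algebra_simps)
qed

lemma mult_seminorm_strict_mono_if_archimedean:
  fixes f :: "int \<Rightarrow> 'r::tot_aura"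
  assumes tg: "tempered_growth TYPE('r)" and f: "mult_seminorm f" and f2: "1 < f 2"
  shows "strict_mono (\<lambda>n. f (int n))"
proof -
  have gt1: "1 < f (int n)" if "2 \<le> n" for n
  proof (rule ccontr)
    assume "\<not> 1 < f (int n)"
    then have "f (int 2) \<le> 1" using mult_seminorm_of_nat_le_one[OF tg f that, of 2] by (simp add: not_less)
    with f2 show False by simp
  qed
  have mono: "f (int m) \<le> f (int n)" if "m \<le> n" for m n
  proof (cases "2 \<le> n")
    case True
    then show ?thesis using mult_seminorm_of_nat_le_max[OF tg f True that] gt1[OF True] by simp
  next
    case False
    with that consider "m = n" | "m = 0" by linarith
    then show ?thesis by cases (simp_all add: mult_seminorm_zero[OF f])
  qed
  show ?thesis unfolding strict_mono_Suc_iff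
  proof
    fix n :: nat
    consider "n = 0" | "n = 1" | "2 \<le> n" by linarith
    then show "f (int n) < f (int (Suc n))"
    proof cases
      case 1
      then show ?thesis by (simp add: mult_seminorm_zero[OF f] mult_seminorm_one[OF f])
    next
      case 2
      then show ?thesis using f2 by (simp add: mult_seminorm_one[OF f])
    next
      case 3
      define c b where "c = f (int n)" and "b = n * n"
      show ?thesis
      proof (rule ccontr)
        assume "\<not> f (int n) < f (int (Suc n))"
        with mono[of n "Suc n"] have eq: "f (int (Suc n)) = c" unfolding c_def by simp
        have "c ^ Suc b = f (int (n ^ Suc b))"
          unfolding c_def by (simp only: of_nat_power mult_seminorm_power[OF f])
        also have "\<dots> \<le> f (int (Suc n ^ b))"
          using power_Suc_le_Suc_power[of n] 3 unfolding b_def by (intro mono) simp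
        also have "\<dots> = 1 * c ^ b" using eq by (simp add: mult_seminorm_power[OF f])
        finally have le: "c * c ^ b \<le> 1 * c ^ b" by simp
        from zero_less_one gt1[OF 3] have "0 < c" unfolding c_def by (rule order.strict_trans)
        then have "c ^ b \<noteq> 0" by simp
        from le have "c \<le> 1" by (rule iffD1[OF aura_mult_le_cancel_right[OF \<open>c ^ b \<noteq> 0\<close>]])
        with gt1[OF 3] show False unfolding c_def by simp
      qed
    qed
  qed
qed

lemma mult_equiv_arch_abs:
  fixes f :: "int \<Rightarrow> 'r::tot_aura"
  assumes tg: "tempered_growth TYPE('r)" and f: "mult_seminorm f" and "1 < f 2"
  shows "mult_equiv f arch_abs"
proof (rule mult_equiv_if_le_iff)
  show "f x \<le> f y \<longleftrightarrow> arch_abs x \<le> arch_abs y" for x y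
  proof -
    have "f x \<le> f y \<longleftrightarrow> f \<bar>x\<bar> \<le> f \<bar>y\<bar>" by (simp add: mult_seminorm_abs[OF f])
    also have "\<dots> \<longleftrightarrow> nat \<bar>x\<bar> \<le> nat \<bar>y\<bar>"
      using strict_mono_less_eq[OF mult_seminorm_strict_mono_if_archimedean[OF assms], of "nat \<bar>x\<bar>" "nat \<bar>y\<bar>"]
      by simp
    also have "\<dots> \<longleftrightarrow> arch_abs x \<le> arch_abs y" by (simp add: arch_abs_le_iff nat_le_eq_zle)
    finally show ?thesis .
  qed
qed (simp_all add: mult_seminorm_mult f mult_seminorm_arch_abs)

section \<open>The non-archimedean case\<close>

lemma mult_seminorm_le_one:
  fixes f :: "int \<Rightarrow> 'r::tot_aura"
  assumes tg: "tempered_growth TYPE('r)" and f: "mult_seminorm f" and "f 2 \<le> 1"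
  shows "f x \<le> 1"
proof -
  have "f (int (nat \<bar>x\<bar>)) \<le> 1"
    by (rule mult_seminorm_of_nat_le_one[OF tg f, of 2]) (use assms in simp_all)
  then show ?thesis by (simp add: mult_seminorm_abs[OF f])
qed

lemma mult_equiv_trivial_abs:
  fixes f :: "int \<Rightarrow> 'r::tot_aura"
  assumes f: "mult_seminorm f" and one: "\<And>x. x \<noteq> 0 \<Longrightarrow> f x = 1"
  shows "mult_equiv f trivial_abs"
proof (rule mult_equiv_if_le_iff)
  show "f x \<le> f y \<longleftrightarrow> trivial_abs x \<le> trivial_abs y" for x y
    using one[of x] one[of y] by (cases "x = 0"; cases "y = 0")
      (simp_all add: trivial_abs_le_iff mult_seminorm_zero[OF f])
qed (simp_all add: mult_seminorm_mult f mult_seminorm_trivial_abs)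

context
  fixes f :: "int \<Rightarrow> 'r::tot_aura" and p :: nat
  assumes f: "mult_seminorm f" and le1: "\<And>x. f x \<le> 1"
    and p: "0 < p" "f (int p) < 1" and least: "\<And>k. 0 < k \<Longrightarrow> f (int k) < 1 \<Longrightarrow> p \<le> k"
begin

lemma mult_seminorm_least_below_one_prime: "prime p"
  unfolding prime_nat_iff
proof (intro conjI allI impI)
  show "1 < p" using p mult_seminorm_one[OF f] by (cases "p = 1") auto
  fix m
  assume "m dvd p"
  then obtain k where k: "p = m * k" by blast
  with p have "0 < m" "0 < k" by auto
  have "f (int m) * f (int k) < 1" using p k by (simp add: mult_seminorm_mult[OF f])
  have "f (int m) < 1 \<or> f (int k) < 1"
  proof (rule ccontr)
    assume "\<not> ?thesis"
    then have "f (int m) = 1" "f (int k) = 1"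
      using le1[of "int m"] le1[of "int k"] by (auto intro: order.antisym simp: not_less)
    with \<open>f (int m) * f (int k) < 1\<close> show False by simp
  qed
  then show "m = 1 \<or> m = p"
  proof
    assume "f (int m) < 1"
    then have "p \<le> m" using least[OF \<open>0 < m\<close>] by simp
    moreover have "m \<le> p" using \<open>m dvd p\<close> p by (simp add: dvd_imp_le)
    ultimately show ?thesis by simp
  next
    assume "f (int k) < 1"
    then have "p \<le> k" using least[OF \<open>0 < k\<close>] by simp
    moreover have "k \<le> p" using k p by (intro dvd_imp_le) simp_all
    ultimately have "k = p" by simp
    with k p show ?thesis by simp
  qed
qed

lemma mult_seminorm_below_one_iff_dvd:
  assumes tg: "tempered_growth TYPE('r)"
  shows "f x < 1 \<longleftrightarrow> int p dvd x"
proof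
  assume "int p dvd x"
  then obtain y where "x = int p * y" by blast
  then have "f x \<le> f (int p) * 1"
    using mult_left_mono[OF le1[of y], of "f (int p)"] by (simp add: mult_seminorm_mult[OF f])
  with p show "f x < 1" by simp
next
  assume "f x < 1"
  text \<open>The remainder of \<open>x\<close> modulo \<open>p\<close> is below one by the ultrametric inequality,
    hence zero by minimality of \<open>p\<close>.\<close>
  define q r where "q = x div int p" and "r = x mod int p"
  have q: "r = x + - (int p * q)" unfolding r_def q_def by (simp add: minus_div_mult_eq_mod[symmetric])
  have "f (- (int p * q)) = f (int p) * f q"
    by (simp add: mult_seminorm_minus[OF f] mult_seminorm_mult[OF f])
  also have "\<dots> \<le> f (int p) * 1" by (rule mult_left_mono[OF le1]) simp
  also have "\<dots> < 1" using p by simp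
  finally have "f (- (int p * q)) < 1" .
  have "f r \<le> max (f x) (f (- (int p * q)))"
    using mult_seminorm_ultrametric[OF tg f le1, of x "- (int p * q)"] q by simp
  also have "\<dots> < 1" using \<open>f x < 1\<close> \<open>f (- (int p * q)) < 1\<close> by simp
  finally have "f r < 1" .
  have "0 \<le> r" "r < int p" using p unfolding r_def by simp_all
  have "r = 0"
  proof (rule ccontr)
    assume "r \<noteq> 0"
    with \<open>0 \<le> r\<close> \<open>f r < 1\<close> have "p \<le> nat r" by (intro least) simp_all
    with \<open>0 \<le> r\<close> \<open>r < int p\<close> show False by (simp add: le_nat_iff)
  qed
  then show "int p dvd x" unfolding r_def by (simp add: dvd_eq_mod_eq_0)
qed

end

lemma mult_equiv_residual_abs:
  fixes f :: "int \<Rightarrow> 'r::tot_aura"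
  assumes f: "mult_seminorm f" and le1: "\<And>x. f x \<le> 1" and p: "prime p"
    and below: "\<And>x. f x < 1 \<longleftrightarrow> int p dvd x" and "f (int p) = 0"
  shows "mult_equiv f (residual_abs p)"
proof (rule mult_equiv_if_le_iff)
  have "f x = (if int p dvd x then 0 else 1)" for x
  proof (cases "int p dvd x")
    case True
    then obtain y where "x = int p * y" by blast
    then show ?thesis using True \<open>f (int p) = 0\<close> by (simp add: mult_seminorm_mult[OF f])
  next
    case False
    then show ?thesis using below[of x] le1[of x] by simp
  qed
  then show "f x \<le> f y \<longleftrightarrow> residual_abs p x \<le> residual_abs p y" for x y
    by (simp add: residual_abs_le_iff)
qed (simp_all add: mult_seminorm_mult f mult_seminorm_residual_abs p)

lemma mult_equiv_padic_abs:
  fixes f :: "int \<Rightarrow> 'r::tot_aura"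
  assumes f: "mult_seminorm f" and le1: "\<And>x. f x \<le> 1" and p: "prime p"
    and below: "\<And>x. f x < 1 \<longleftrightarrow> int p dvd x" and "f (int p) \<noteq> 0"
  shows "mult_equiv f (padic_abs p)"
proof (rule mult_equiv_if_le_iff)
  define c where "c = f (int p)"
  have c: "0 < c" "c < 1"
    using \<open>f (int p) \<noteq> 0\<close> below[of "int p"] unfolding c_def by (simp_all add: order.not_eq_order_implies_strict)
  have val: "f x = c ^ multiplicity (int p) x" if "x \<noteq> 0" for x
  proof -
    have "\<not> is_unit (int p)" using prime_gt_1_nat[OF p] by simp
    then obtain w where w: "x = int p ^ multiplicity (int p) x * w" "\<not> int p dvd w"
      using multiplicity_decompose'[OF \<open>x \<noteq> 0\<close>] by blast
    have "f w = 1" using below[of w] le1[of w] w(2) by simp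
    then show ?thesis
      by (subst w(1)) (simp add: mult_seminorm_mult[OF f] mult_seminorm_power[OF f] c_def)
  qed
  have "c ^ k \<noteq> 0" for k using c by simp
  then show "f x \<le> f y \<longleftrightarrow> padic_abs p x \<le> padic_abs p y" for x y
    by (cases "x = 0"; cases "y = 0")
      (simp_all add: padic_abs_le_iff[OF p] mult_seminorm_zero[OF f] val aura_power_le_power_iff[OF c])
qed (simp_all add: mult_seminorm_mult f mult_seminorm_padic_abs p)

lemma mult_seminorm_int_classification:
  fixes f :: "int \<Rightarrow> 'r::tot_aura"
  assumes tg: "tempered_growth TYPE('r)" and f: "mult_seminorm f"
  shows "(\<exists>p. prime p \<and> (mult_equiv f (padic_abs p) \<or> mult_equiv f (residual_abs p)))
    \<or> mult_equiv f trivial_abs \<or> mult_equiv f arch_abs"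
proof (cases "1 < f 2")
  case True
  then show ?thesis using mult_equiv_arch_abs[OF tg f] by blast
next
  case False
  then have le1: "f x \<le> 1" for x using mult_seminorm_le_one[OF tg f] by (simp add: not_less)
  show ?thesis
  proof (cases "\<exists>k>0. f (int k) < 1")
    case True
    define p where "p = (LEAST k. 0 < k \<and> f (int k) < 1)"
    have p: "0 < p" "f (int p) < 1" using LeastI_ex[OF True] unfolding p_def by simp_all
    have least: "p \<le> k" if "0 < k" "f (int k) < 1" for k
      using that unfolding p_def by (simp add: Least_le)
    have "prime p" by (rule mult_seminorm_least_below_one_prime[OF f le1 p least])
    note below = mult_seminorm_below_one_iff_dvd[OF f le1 p least tg]
    show ?thesis
    proof (cases "f (int p) = 0")
      case True
      with \<open>prime p\<close> show ?thesis using mult_equiv_residual_abs[OF f le1 \<open>prime p\<close> below] by blast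
    next
      case False
      with \<open>prime p\<close> show ?thesis using mult_equiv_padic_abs[OF f le1 \<open>prime p\<close> below] by blast
    qed
  next
    case False
    have "f x = 1" if "x \<noteq> 0" for x
    proof -
      have "0 < nat \<bar>x\<bar>" using that by simp
      with False have "\<not> f (int (nat \<bar>x\<bar>)) < 1" by blast
      then show ?thesis using le1[of x] by (simp add: mult_seminorm_abs[OF f])
    qed
    then show ?thesis using mult_equiv_trivial_abs[OF f] by blast
  qed
qed

definition residual_abs_nn :: "nat \<Rightarrow> int \<Rightarrow> nnreal" where
  "residual_abs_nn p n = (if int p dvd n then 0 else 1)"

lemma residual_abs_nn_le_iff: "residual_abs_nn p x \<le> residual_abs_nn p y \<longleftrightarrow> int p dvd x \<or> \<not> int p dvd y"
  by (simp add: residual_abs_nn_def nnreal_le_iff)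

lemma mult_seminorm_residual_abs_nn:
  assumes "prime p"
  shows "mult_seminorm (residual_abs_nn p)"
proof (rule mult_seminormI)
  have "prime (int p)" using assms by simp
  then show "residual_abs_nn p (a * b) = residual_abs_nn p a * residual_abs_nn p b" for a b
    by (simp add: residual_abs_nn_def prime_dvd_mult_iff)
  show "residual_abs_nn p (a + b) \<le> residual_abs_nn p a + residual_abs_nn p b" for a b
    by (auto simp: residual_abs_nn_def nnreal_le_iff)
  show "residual_abs_nn p 1 = 1"
    using prime_gt_1_nat[OF assms] by (simp add: residual_abs_nn_def)
qed (simp add: residual_abs_nn_def)

lemma mult_equiv_residual_abs_nn:
  assumes "prime p"
  shows "mult_equiv (residual_abs_nn p) (residual_abs p)"
  using assms
  by (intro mult_equiv_if_le_iff mult_seminorm_mult mult_seminorm_residual_abs_nn mult_seminorm_residual_abs)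
    (simp_all add: residual_abs_nn_le_iff residual_abs_le_iff)

lemma mult_seminorm_int_nnreal_representative:
  fixes f :: "int \<Rightarrow> 'r::tot_aura"
  assumes tg: "tempered_growth TYPE('r)" and f: "mult_seminorm f"
  shows "\<exists>g :: int \<Rightarrow> nnreal. mult_seminorm g \<and> mult_equiv g f"
  using mult_seminorm_int_classification[OF tg f]
proof (elim disjE exE conjE)
  fix p :: nat
  assume p: "prime p"
  show ?thesis if "mult_equiv f (padic_abs p)"
    using mult_seminorm_padic_abs[OF p] mult_equiv_sym[OF that] by blast
  show ?thesis if "mult_equiv f (residual_abs p)"
    using mult_seminorm_residual_abs_nn[OF p]
      mult_equiv_trans[OF mult_equiv_residual_abs_nn[OF p] mult_equiv_sym[OF that]] by blast
next
  show ?thesis if "mult_equiv f trivial_abs"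
    using mult_seminorm_trivial_abs mult_equiv_sym[OF that] by blast
  show ?thesis if "mult_equiv f arch_abs"
    using mult_seminorm_arch_abs mult_equiv_sym[OF that] by blast
qed

section \<open>Tempered growth of \<open>\<real>\<^sub>+\<close> and of the Boolean semifield\<close>

lemma tempered_growth_bsf: "tempered_growth TYPE(bsf)"
  unfolding tempered_growth_def
proof (intro allI impI)
  show "x \<le> 1" for x :: bsf by (cases x) (simp_all add: less_eq_bsf_def one_bsf_def)
qed

lemma poly_nat_le_coeff_sum_times_power:
  fixes P :: "nat poly"
  assumes "1 \<le> n"
  shows "poly P n \<le> (\<Sum>i\<le>degree P. coeff P i) * n ^ degree P"
proof -
  have "poly P n = (\<Sum>i\<le>degree P. coeff P i * n ^ i)" by (rule poly_altdef)
  also have "\<dots> \<le> (\<Sum>i\<le>degree P. coeff P i * n ^ degree P)"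
    using assms by (intro sum_mono mult_left_mono power_increasing) auto
  also have "\<dots> = (\<Sum>i\<le>degree P. coeff P i) * n ^ degree P" by (simp add: sum_distrib_right)
  finally show ?thesis .
qed

lemma tempered_growth_nnreal: "tempered_growth TYPE(nnreal)"
  unfolding tempered_growth_def
proof (intro allI impI)
  fix P :: "nat poly" and x :: nnreal
  assume bound: "\<forall>n. x ^ n \<le> of_nat (poly P n)"
  define C d where "C = real (\<Sum>i\<le>degree P. coeff P i)" and "d = degree P"
  have poly_bound: "nn_val x ^ n \<le> C * real n ^ d" if "1 \<le> n" for n
  proof -
    have "nn_val x ^ n \<le> real (poly P n)" using bound by (simp add: nnreal_le_iff)
    also have "\<dots> \<le> C * real n ^ d"
      unfolding C_def d_def using poly_nat_le_coeff_sum_times_power[OF that, of P]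
      by (metis of_nat_le_iff of_nat_mult of_nat_power)
    finally show ?thesis .
  qed
  show "x \<le> 1"
  proof (rule ccontr)
    assume "\<not> x \<le> 1"
    then have "1 < nn_val x" by (simp add: nnreal_le_iff)
    then have "\<forall>\<^sub>F n in sequentially. C * real n ^ d < nn_val x ^ n" by real_asymp
    then obtain N where N: "\<And>n. N \<le> n \<Longrightarrow> C * real n ^ d < nn_val x ^ n"
      unfolding eventually_sequentially by blast
    have "C * real (max N 1) ^ d < nn_val x ^ max N 1" by (rule N) simp
    moreover have "nn_val x ^ max N 1 \<le> C * real (max N 1) ^ d" by (rule poly_bound) simp
    ultimately show False by simp
  qed
qed

theorem proposition3p10:
  shows "(\<forall>f :: int \<Rightarrow> 'r::tot_aura.
            tempered_growth TYPE('r) \<and> mult_seminorm f \<longrightarrow>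
              (\<exists>p::nat. prime p \<and> (mult_equiv f (padic_abs p) \<or> mult_equiv f (residual_abs p)))
              \<or> mult_equiv f trivial_abs \<or> mult_equiv f arch_abs)
       \<and> (tempered_growth TYPE(nnreal) \<and> tempered_growth TYPE(bsf)
          \<and> (\<forall>p::nat. prime p \<longrightarrow> mult_seminorm (padic_abs p) \<and> mult_seminorm (residual_abs p))
          \<and> mult_seminorm trivial_abs \<and> mult_seminorm arch_abs)
       \<and> (\<forall>f :: int \<Rightarrow> 'r::tot_aura.
            tempered_growth TYPE('r) \<and> mult_seminorm f \<longrightarrow>
              (\<exists>g :: int \<Rightarrow> nnreal. mult_seminorm g \<and> mult_equiv g f))"
  using mult_seminorm_int_classification mult_seminorm_int_nnreal_representative
    tempered_growth_nnreal tempered_growth_bsf mult_seminorm_padic_abs mult_seminorm_residual_abs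
    mult_seminorm_trivial_abs mult_seminorm_arch_abs
  by blast

end
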